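(* Suppose $0<\epsilon\le 1$. Then the probability measure $\pi$ on $\mathcal{A}=\{A\subset\mathcal{E}\}$ defined in the context is stochastically dominated (with respect to inclusion) by independent Bernoulli bond percolation on $\mathcal{E}$ in which each edge $\{x,y\}$ is open with probability $2\epsilon J_{x,y}$. More precisely, for every $D\subset\mathcal{E}$ and every edge $e=\{x,y\}\in\mathcal{E}\setminus D$, \[ \pi(D\cup\{e\})\le 2\epsilon J_{x,y}\,\pi(D). \]
   Context: Setting: angles $\theta_u\in[0,2\pi)$, $u\in\mathbb{Z}^2$; couplings $J_{u,v}=J_{u-v}\ge0$ with $J_x=J_{-x}$, $\sum_xJ_x=1$. Fix $M\ge1$, $\Lambda=\{-M,\dots,M\}^2$, a boundary condition $\bar\theta$ (configurations satisfy $\theta_y=\bar\theta_y$ for $y\notin\Lambda$), and let $\mathcal{E}$ be the set of unordered pairs $\{u,v\}$ of distinct vertices meeting $\Lambda$. The interaction is written $f=\tilde f+\bar\epsilon$ where $\tilde f(t)=\sum_{k=1}^K c_k\cos(kt)$ is a trigonometric polynomial and $\bar\epsilon$ is a continuous $2\pi$-periodic function with $0\le\bar\epsilon\le\epsilon$. For $A\subset\mathcal{E}$ set \[ Z_A=\int\exp\Bigl\{\sum_{\{u,v\}\in\mathcal{E}}J_{u,v}\tilde f(\theta_u-\theta_v)\Bigr\}\prod_{\{u,v\}\in A}\bigl(e^{J_{u,v}\bar\epsilon(\theta_u-\theta_v)}-1\bigr)\,\prod_{u\in\Lambda}d\theta_u, \] $Z=\sum_{A\subset\mathcal{E}}Z_A$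 (which equals the partition function with interaction $f$), and $\pi(A)=Z_A/Z$. *)

theory Defs
  imports "HOL-Analysis.Analysis"
begin

type_synonym vertex = "int \<times> int"

definition box :: "int \<Rightarrow> vertex set" where
  "box M = {-M..M} \<times> {-M..M}"

definition edges :: "int \<Rightarrow> vertex set set" where
  "edges M = {{u, v} | u v. u \<noteq> v \<and> (u \<in> box M \<or> v \<in> box M)}"

definition ends :: "'a set \<Rightarrow> 'a \<times> 'a" where
  "ends e = (SOME p. fst p \<noteq> snd p \<and> e = {fst p, snd p})"

definition edge_J :: "(vertex \<Rightarrow> real) \<Rightarrow> vertex set \<Rightarrow> real" where
  "edge_J J e = J (fst (ends e) - snd (ends e))"

definition edge_diff :: "(vertex \<Rightarrow> real) \<Rightarrow> vertex set \<Rightarrow> real" where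
  "edge_diff \<theta> e = \<theta> (fst (ends e)) - \<theta> (snd (ends e))"

definition trig_poly :: "nat \<Rightarrow> (nat \<Rightarrow> real) \<Rightarrow> real \<Rightarrow> real" where
  "trig_poly K c t = (\<Sum>k=1..K. c k * cos (real k * t))"

text \<open>Product over a possibly infinite index set, as the limit of finite partial
  products along the net of finite subsets (agrees with the usual product for finite sets).\<close>
definition net_prod :: "('a \<Rightarrow> real) \<Rightarrow> 'a set \<Rightarrow> real" where
  "net_prod g A = Lim (finite_subsets_at_top A) (\<lambda>F. prod g F)"

text \<open>Configuration: free angles on Lambda, boundary condition outside.\<close>
definition config :: "int \<Rightarrow> (vertex \<Rightarrow> real) \<Rightarrow> (vertex \<Rightarrow> real) \<Rightarrow> vertex \<Rightarrow> real" where
  "config M \<theta>bar \<theta> y = (if y \<in> box M then \<theta> y else \<theta>bar y)"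

definition angle_measure :: "int \<Rightarrow> (vertex \<Rightarrow> real) measure" where
  "angle_measure M = PiM (box M) (\<lambda>_. restrict_space lborel {0..<2*pi})"

definition Z_A :: "(vertex \<Rightarrow> real) \<Rightarrow> int \<Rightarrow> (vertex \<Rightarrow> real) \<Rightarrow> (real \<Rightarrow> real)
                   \<Rightarrow> (real \<Rightarrow> real) \<Rightarrow> vertex set set \<Rightarrow> real" where
  "Z_A J M \<theta>bar ft eb A =
     integral\<^sup>L (angle_measure M)
       (\<lambda>\<theta>. let \<phi> = config M \<theta>bar \<theta> in
          exp (\<Sum>\<^sub>\<infinity>e\<in>edges M. edge_J J e * ft (edge_diff \<phi> e))
          * net_prod (\<lambda>e. exp (edge_J J e * eb (edge_diff \<phi> e)) - 1) A)"

definition Z_total :: "(vertex \<Rightarrow> real) \<Rightarrow> int \<Rightarrow> (vertex \<Rightarrow> real) \<Rightarrow> (real \<Rightarrow> real)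
                   \<Rightarrow> (real \<Rightarrow> real) \<Rightarrow> real" where
  "Z_total J M \<theta>bar ft eb = (\<Sum>\<^sub>\<infinity>A\<in>Pow (edges M). Z_A J M \<theta>bar ft eb A)"

definition edge_pi :: "(vertex \<Rightarrow> real) \<Rightarrow> int \<Rightarrow> (vertex \<Rightarrow> real) \<Rightarrow> (real \<Rightarrow> real)
                   \<Rightarrow> (real \<Rightarrow> real) \<Rightarrow> vertex set set \<Rightarrow> real" where
  "edge_pi J M \<theta>bar ft eb A = Z_A J M \<theta>bar ft eb A / Z_total J M \<theta>bar ft eb"

end

theory Submission
  imports Defs
begin

text \<open>Expanding the product over \<open>A\<close>, the integrand of \<open>Z (A \<union> {e})\<close> is that of \<open>Z A\<close>
  times the bond weight \<open>exp (J\<^sub>e eb (\<theta>\<^sub>x - \<theta>\<^sub>y)) - 1\<close>, which lies in \<open>[0, 2 \<epsilon> J\<^sub>e]\<close>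
  because \<open>J\<^sub>e \<epsilon> \<le> 1\<close> and \<open>exp t - 1 \<le> 2 t\<close> on \<open>[0, 1]\<close>. All integrands are nonnegative,
  so integrating and dividing by \<open>Z \<ge> 0\<close> gives the bound. For infinite \<open>A\<close> the net product
  of bond weights vanishes, since summability of \<open>J\<close> leaves only finitely many weights
  above \<open>1/2\<close>; then both sides are \<open>0\<close>.\<close>

lemma ends_doubleton:
  assumes "x \<noteq> y"
  shows "ends {x, y} = (x, y) \<or> ends {x, y} = (y, x)"
proof -
  have "\<exists>p. fst p \<noteq> snd p \<and> {x, y} = {fst p, snd p}"
    using assms by (intro exI[of _ "(x, y)"]) auto
  then have "fst (ends {x, y}) \<noteq> snd (ends {x, y}) \<and> {x, y} = {fst (ends {x, y}), snd (ends {x, y})}"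
    unfolding ends_def by (rule someI_ex)
  then show ?thesis by (metis doubleton_eq_iff prod.collapse)
qed

lemma edge_J_doubleton:
  assumes "x \<noteq> y" and "\<And>z. J z = J (- z)"
  shows "edge_J J {x, y} = J (x - y)"
  using ends_doubleton[OF assms(1)] assms(2)[of "x - y"] unfolding edge_J_def by auto

lemma edges_eq_image: "edges M = (\<lambda>(u, d). {u, u - d}) ` (box M \<times> - {0})"
proof (intro equalityI subsetI)
  fix e assume "e \<in> edges M"
  then obtain u v where uv: "e = {u, v}" "u \<noteq> v" "u \<in> box M \<or> v \<in> box M"
    unfolding edges_def by blast
  show "e \<in> (\<lambda>(u, d). {u, u - d}) ` (box M \<times> - {0})"
  proof (cases "u \<in> box M")
    case True
    then show ?thesis using uv by (intro image_eqI[of _ _ "(u, u - v)"]) auto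
  next
    case False
    then show ?thesis using uv by (intro image_eqI[of _ _ "(v, v - u)"]) auto
  qed
next
  fix e assume "e \<in> (\<lambda>(u, d). {u, u - d}) ` (box M \<times> - {0})"
  then obtain u d where "e = {u, u - d}" "u \<in> box M" "d \<noteq> 0" by auto
  then show "e \<in> edges M"
    unfolding edges_def by (intro CollectI exI[of _ u] exI[of _ "u - d"]) simp
qed

lemma countable_edges: "countable (edges M)"
  unfolding edges_eq_image by simp

lemma summable_on_image_of_comp:
  fixes f :: "'a \<Rightarrow> 'b::{uniform_topological_group_add, topological_comm_monoid_add,
                           ab_group_add, complete_uniform_space}"
  assumes "(f \<circ> h) summable_on A"
  shows "f summable_on h ` A"
proof -
  define B where "B = inv_into A h ` h ` A"
  have "B \<subseteq> A" unfolding B_def by (auto intro: inv_into_into)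
  moreover have "h ` B = h ` A" unfolding B_def image_image by (auto simp: f_inv_into_f)
  moreover have "inj_on h B" unfolding B_def by (rule inj_onI) (auto simp: f_inv_into_f)
  ultimately show ?thesis
    using summable_on_subset[OF assms] summable_on_reindex[of h B f] by metis
qed

lemma has_sum_nonneg_term_le:
  fixes f :: "'a \<Rightarrow> real"
  assumes "\<And>x. x \<in> A \<Longrightarrow> 0 \<le> f x" and "(f has_sum S) A" and "x \<in> A"
  shows "f x \<le> S"
  using has_sum_mono_neutral[OF has_sum_finite[of "{x}" f] assms(2)] assms(1,3) by auto

lemma edge_J_summable:
  assumes J_nonneg: "\<And>x. 0 \<le> J x" and J_sym: "\<And>x. J x = J (- x)"
    and J_sum: "(J has_sum 1) UNIV"
  shows "edge_J J summable_on edges M"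
proof -
  \<comment> \<open>Parametrise edges as \<open>{u, u - d}\<close> with \<open>u \<in> box M\<close>: the sum is at most \<open>|box M|\<close> copies of \<open>\<Sum> J\<close>.\<close>
  have "(\<lambda>(u, d). J d) summable_on Sigma (box M) (\<lambda>_. UNIV)"
    using J_sum J_nonneg by (intro summable_on_SigmaI[where g = "\<lambda>_. 1"]) (auto simp: box_def)
  then have J_summable: "(\<lambda>(u, d). J d) summable_on box M \<times> - {0}"
    by (rule summable_on_subset) auto
  have "edge_J J {u, u - d} = J d" if "d \<noteq> 0" for u d :: vertex
    using edge_J_doubleton[where J = J, OF _ J_sym, of u "u - d"] that by simp
  then have "(edge_J J \<circ> (\<lambda>(u, d). {u, u - d})) p = (\<lambda>(u, d). J d) p"
    if "p \<in> box M \<times> - {0}" for p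
    using that by (simp add: case_prod_beta mem_Times_iff)
  then have "(edge_J J \<circ> (\<lambda>(u, d). {u, u - d})) summable_on box M \<times> - {0}"
    using summable_on_cong J_summable by blast
  then show ?thesis
    unfolding edges_eq_image by (rule summable_on_image_of_comp)
qed

lemma finite_superlevel_if_summable:
  fixes f :: "'a \<Rightarrow> real"
  assumes "f summable_on A" and "\<And>x. x \<in> A \<Longrightarrow> 0 \<le> f x" and "0 < \<delta>"
  shows "finite {x\<in>A. \<delta> \<le> f x}"
proof (rule ccontr)
  assume "infinite {x\<in>A. \<delta> \<le> f x}"
  then obtain B where B: "finite B" "card B = nat \<lceil>infsum f A / \<delta>\<rceil> + 1" "B \<subseteq> {x\<in>A. \<delta> \<le> f x}"
    using infinite_arbitrarily_large by blast
  have "real (card B) * \<delta> \<le> sum f B"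
    using B by (intro sum_bounded_below[where K = \<delta>, simplified]) auto
  also have "\<dots> \<le> infsum f A"
    using B assms by (intro finite_sum_le_infsum) auto
  finally have "real (card B) * \<delta> \<le> infsum f A" .
  moreover have "infsum f A / \<delta> < real (card B)" using B(2) by linarith
  ultimately show False using assms(3) by (simp add: field_simps)
qed

section \<open>Products over infinite index sets\<close>

lemma net_prod_finite: "finite A \<Longrightarrow> net_prod g A = prod g A"
  unfolding net_prod_def finite_subsets_at_top_finite
  by (rule tendsto_Lim) (auto simp: trivial_limit_def eventually_principal)

lemma prod_le_of_bounded_factors:
  fixes g :: "'a \<Rightarrow> real"
  assumes "finite F" and "T \<subseteq> F" and "n \<le> card (F - T)" and "0 \<le> q" and "q \<le> 1"
    and g_nonneg: "\<And>x. x \<in> F \<Longrightarrow> 0 \<le> g x"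
    and small: "\<And>x. x \<in> F - T \<Longrightarrow> g x \<le> q" and large: "\<And>x. x \<in> T \<Longrightarrow> g x \<le> C"
  shows "prod g F \<le> q ^ n * C ^ card T"
proof -
  have "prod g (F - T) \<le> (\<Prod>x\<in>F - T. q)"
    using g_nonneg small by (intro prod_mono) auto
  also have "\<dots> \<le> q ^ n"
    using assms(3-5) by (simp add: power_decreasing)
  finally have "prod g (F - T) \<le> q ^ n" .
  moreover have "prod g T \<le> (\<Prod>x\<in>T. C)"
    using g_nonneg large assms(2) by (intro prod_mono) auto
  moreover have "0 \<le> prod g T"
    using g_nonneg assms(2) by (auto intro!: prod_nonneg)
  ultimately have "prod g (F - T) * prod g T \<le> q ^ n * C ^ card T"
    using \<open>0 \<le> q\<close> by (intro mult_mono) auto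
  then show ?thesis
    using prod.subset_diff[OF assms(2)] assms(1) by metis
qed

lemma net_prod_eq_0_if_infinite:
  fixes g :: "'a \<Rightarrow> real"
  assumes "infinite A" and "q < 1" and finite_large: "finite {x\<in>A. q \<le> g x}"
    and g_nonneg: "\<And>x. x \<in> A \<Longrightarrow> 0 \<le> g x" and g_le: "\<And>x. x \<in> A \<Longrightarrow> g x \<le> C"
  shows "net_prod g A = 0"
  unfolding net_prod_def
proof (rule tendsto_Lim)
  show "\<not> trivial_limit (finite_subsets_at_top A)"
    by (simp add: finite_subsets_at_top_neq_bot)
  define T where "T = {x\<in>A. q \<le> g x}"
  have "0 \<le> q"
  proof (rule ccontr)
    assume "\<not> 0 \<le> q"
    then have "T = A" unfolding T_def using g_nonneg by force
    then show False using assms(1) finite_large unfolding T_def by simp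
  qed
  show "(prod g \<longlongrightarrow> 0) (finite_subsets_at_top A)"
  proof (rule tendstoI)
    fix \<eta> :: real assume "\<eta> > 0"
    obtain n where n: "q ^ n < \<eta> / (max 1 C) ^ card T"
      using real_arch_pow_inv[of "\<eta> / (max 1 C) ^ card T" q] \<open>\<eta> > 0\<close> \<open>q < 1\<close> by auto
    have "infinite (A - T)" using assms(1) finite_large unfolding T_def by auto
    then obtain B where B: "finite B" "card B = n" "B \<subseteq> A - T"
      using infinite_arbitrarily_large by blast
    show "\<forall>\<^sub>F F in finite_subsets_at_top A. dist (prod g F) 0 < \<eta>"
      unfolding eventually_finite_subsets_at_top
    proof (intro exI[of _ "T \<union> B"] conjI allI impI)
      show "finite (T \<union> B)" "T \<union> B \<subseteq> A" using B finite_large by (auto simp: T_def)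
      fix F assume F: "finite F \<and> T \<union> B \<subseteq> F \<and> F \<subseteq> A"
      then have "B \<subseteq> F - T" using B by auto
      then have "n \<le> card (F - T)"
        using card_mono[OF finite_Diff] F B(2) by blast
      moreover have "g x \<le> q" if "x \<in> F - T" for x
        using that F unfolding T_def by auto
      moreover have "g x \<le> max 1 C" if "x \<in> T" for x
        using that g_le unfolding T_def by (simp add: le_max_iff_disj)
      ultimately have "prod g F \<le> q ^ n * (max 1 C) ^ card T"
        using F \<open>0 \<le> q\<close> \<open>q < 1\<close> g_nonneg
        by (intro prod_le_of_bounded_factors[where T = T]) (auto simp: T_def)
      also have "\<dots> < \<eta>" using n by (simp add: field_simps)
      finally show "dist (prod g F) 0 < \<eta>"
        using F g_nonneg by (simp add: prod_nonneg subset_iff)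
    qed
  qed
qed

lemma measurable_angle_component:
  assumes "u \<in> box M"
  shows "(\<lambda>\<theta>. \<theta> u) \<in> borel_measurable (angle_measure M)"
proof -
  have "(\<lambda>\<theta>. \<theta> u) \<in> angle_measure M \<rightarrow>\<^sub>M restrict_space lborel {0..<2*pi}"
    unfolding angle_measure_def using assms by (rule measurable_component_singleton)
  moreover have "(\<lambda>x. x) \<in> restrict_space lborel {0..<2*pi} \<rightarrow>\<^sub>M (borel :: real measure)"
    by (intro measurable_restrict_space1) simp
  ultimately have "(\<lambda>\<theta>. (\<lambda>x. x) (\<theta> u)) \<in> borel_measurable (angle_measure M)"
    by (rule measurable_compose)
  then show ?thesis by simp
qed

lemma borel_measurable_edge_diff:
  assumes "continuous_on UNIV h"
  shows "(\<lambda>\<theta>. h (edge_diff (config M \<theta>bar \<theta>) e)) \<in> borel_measurable (angle_measure M)"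
proof -
  have "(\<lambda>\<theta>. config M \<theta>bar \<theta> y) \<in> borel_measurable (angle_measure M)" for y
    unfolding config_def by (cases "y \<in> box M") (auto intro: measurable_angle_component)
  then have "(\<lambda>\<theta>. edge_diff (config M \<theta>bar \<theta>) e) \<in> borel_measurable (angle_measure M)"
    unfolding edge_diff_def by (intro borel_measurable_diff)
  then show ?thesis
    by (rule measurable_compose[OF _ borel_measurable_continuous_onI[OF assms]])
qed

lemma finite_measure_angle_measure: "finite_measure (angle_measure M)"
proof -
  interpret product_sigma_finite "\<lambda>_::vertex. restrict_space lborel {0..<2*pi}"
    by (intro product_sigma_finite.intro sigma_finite_measure_restrict_space sigma_finite_lborel) simp
  have "emeasure (angle_measure M) (space (angle_measure M)) =
        (\<Prod>i\<in>box M. emeasure (restrict_space lborel {0..<2*pi}) (space (restrict_space lborel {0..<2*pi})))"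
    unfolding angle_measure_def space_PiM
    by (rule emeasure_PiM) (auto simp: box_def sets_restrict_space)
  also have "\<dots> = (\<Prod>i\<in>box M. ennreal (2*pi))"
    by (simp add: emeasure_restrict_space space_restrict_space)
  finally show ?thesis by (intro finite_measureI) (simp add: ennreal_power)
qed

lemma borel_measurable_infsum:
  fixes f :: "'a \<Rightarrow> 'b \<Rightarrow> real"
  assumes "countable E"
    and measurable: "\<And>e. (\<lambda>x. f x e) \<in> borel_measurable N"
    and summable: "\<And>x. f x summable_on E"
  shows "(\<lambda>x. infsum (f x) E) \<in> borel_measurable N"
proof (cases "finite E")
  case True
  then show ?thesis using measurable by simp
next
  case False
  then have bij: "bij_betw (from_nat_into E) UNIV E"
    using \<open>countable E\<close> by (intro bij_betw_from_nat_into)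
  have "(\<lambda>k. \<Sum>i<k. f x (from_nat_into E i)) \<longlonglongrightarrow> infsum (f x) E" for x
  proof -
    have "(\<lambda>i. f x (from_nat_into E i)) summable_on UNIV"
      using summable_on_reindex_bij_betw[OF bij] summable by metis
    moreover have "infsum (f x) E = infsum (\<lambda>i. f x (from_nat_into E i)) UNIV"
      using infsum_reindex_bij_betw[OF bij] by metis
    ultimately have "(\<lambda>i. f x (from_nat_into E i)) sums infsum (f x) E"
      by (simp add: has_sum_imp_sums)
    then show ?thesis by (simp add: sums_def)
  qed
  moreover have "(\<lambda>x. \<Sum>i<k. f x (from_nat_into E i)) \<in> borel_measurable N" for k
    using measurable by (intro borel_measurable_sum)
  ultimately show ?thesis
    by (rule borel_measurable_LIMSEQ_real)
qed

lemma exp_le_one_plus_twice: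
  fixes t :: real
  assumes "0 \<le> t" "t \<le> 1"
  shows "exp t \<le> 1 + 2 * t"
proof -
  have "exp t \<le> 1 + t + t\<^sup>2" using assms by (rule exp_bound)
  moreover have "t\<^sup>2 \<le> t" using assms mult_left_le[of t t] by (simp add: power2_eq_square)
  ultimately show ?thesis by simp
qed

lemma continuous_on_trig_poly: "continuous_on UNIV (trig_poly K c)"
  unfolding trig_poly_def by (intro continuous_intros)

lemma bounded_range_trig_poly: "bounded (range (trig_poly K c))"
proof -
  have "\<bar>trig_poly K c t\<bar> \<le> (\<Sum>k=1..K. \<bar>c k\<bar>)" for t
  proof -
    have "\<bar>trig_poly K c t\<bar> \<le> (\<Sum>k=1..K. \<bar>c k * cos (real k * t)\<bar>)"
      unfolding trig_poly_def by (rule sum_abs)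
    also have "\<dots> \<le> (\<Sum>k=1..K. \<bar>c k\<bar>)"
      by (intro sum_mono) (simp add: abs_mult mult_left_le)
    finally show ?thesis .
  qed
  then show ?thesis by (auto simp: bounded_iff)
qed

section \<open>The expanded partition function\<close>

locale rotator_model =
  fixes J :: "vertex \<Rightarrow> real" and M :: int and \<theta>bar :: "vertex \<Rightarrow> real"
    and ft eb :: "real \<Rightarrow> real" and \<epsilon> :: real
  assumes J_nonneg: "\<And>x. 0 \<le> J x"
    and J_sym: "\<And>x. J x = J (- x)"
    and J_sum: "(J has_sum 1) UNIV"
    and ft_cont: "continuous_on UNIV ft"
    and ft_bounded: "bounded (range ft)"
    and eb_cont: "continuous_on UNIV eb"
    and eb_nonneg: "\<And>t. 0 \<le> eb t"
    and eb_le: "\<And>t. eb t \<le> \<epsilon>"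
    and eps_le_1: "\<epsilon> \<le> 1"
begin

definition interaction :: "(vertex \<Rightarrow> real) \<Rightarrow> real" where
  "interaction \<theta> = (\<Sum>\<^sub>\<infinity>e\<in>edges M. edge_J J e * ft (edge_diff (config M \<theta>bar \<theta>) e))"

definition bond_weight :: "(vertex \<Rightarrow> real) \<Rightarrow> vertex set \<Rightarrow> real" where
  "bond_weight \<theta> e = exp (edge_J J e * eb (edge_diff (config M \<theta>bar \<theta>) e)) - 1"

lemma Z_A_eq_integral:
  "Z_A J M \<theta>bar ft eb A =
     (\<integral>\<theta>. exp (interaction \<theta>) * net_prod (bond_weight \<theta>) A \<partial>angle_measure M)"
  unfolding Z_A_def Let_def interaction_def bond_weight_def ..

lemma edge_J_nonneg: "0 \<le> edge_J J e"
  unfolding edge_J_def by (rule J_nonneg)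

lemma edge_J_le_1: "edge_J J e \<le> 1"
  unfolding edge_J_def using J_nonneg J_sum by (rule has_sum_nonneg_term_le) simp

lemma bond_weight_nonneg: "0 \<le> bond_weight \<theta> e"
  unfolding bond_weight_def using edge_J_nonneg eb_nonneg by simp

lemma eps_edge_J_le_1: "\<epsilon> * edge_J J e \<le> 1"
  by (rule mult_le_one[OF eps_le_1 edge_J_nonneg edge_J_le_1])

lemma bond_weight_le: "bond_weight \<theta> e \<le> 2 * \<epsilon> * edge_J J e"
proof -
  define t where "t = edge_J J e * eb (edge_diff (config M \<theta>bar \<theta>) e)"
  have "0 \<le> t" unfolding t_def using edge_J_nonneg eb_nonneg by simp
  have "t \<le> \<epsilon> * edge_J J e"
    unfolding t_def mult.commute[of "edge_J J e"] by (rule mult_right_mono[OF eb_le edge_J_nonneg])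
  then have "exp t \<le> 1 + 2 * t"
    using \<open>0 \<le> t\<close> eps_edge_J_le_1[of e] by (intro exp_le_one_plus_twice) auto
  then show ?thesis
    unfolding bond_weight_def t_def[symmetric] using \<open>t \<le> \<epsilon> * edge_J J e\<close> by simp
qed

lemma bond_weight_le_2: "bond_weight \<theta> e \<le> 2"
  using bond_weight_le[of \<theta> e] eps_edge_J_le_1[of e] by simp

lemma borel_measurable_bond_weight:
  "(\<lambda>\<theta>. bond_weight \<theta> e) \<in> borel_measurable (angle_measure M)"
proof -
  have "continuous_on UNIV (\<lambda>t. exp (edge_J J e * eb t) - 1)"
    by (intro continuous_intros eb_cont)
  from borel_measurable_edge_diff[OF this] show ?thesis
    unfolding bond_weight_def .
qed

lemma net_prod_bond_weight_infinite:
  assumes "A \<subseteq> edges M" and "infinite A"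
  shows "net_prod (bond_weight \<theta>) A = 0"
proof (rule net_prod_eq_0_if_infinite[where q = "1/2" and C = 2])
  have "{e\<in>A. 1/2 \<le> bond_weight \<theta> e} \<subseteq> {e\<in>edges M. 1/4 \<le> edge_J J e}"
  proof safe
    fix e assume "e \<in> A" and large: "1/2 \<le> bond_weight \<theta> e"
    have "\<epsilon> * edge_J J e \<le> edge_J J e"
      using mult_right_mono[OF eps_le_1 edge_J_nonneg] by simp
    then show "1/4 \<le> edge_J J e" using large bond_weight_le[of \<theta> e] by linarith
  qed (use assms in auto)
  moreover have "finite {e\<in>edges M. 1/4 \<le> edge_J J e}"
    using edge_J_summable[OF J_nonneg J_sym J_sum] edge_J_nonneg
    by (rule finite_superlevel_if_summable) simp
  ultimately show "finite {e\<in>A. 1/2 \<le> bond_weight \<theta> e}"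
    by (rule finite_subset)
qed (use assms bond_weight_nonneg bond_weight_le_2 in auto)

lemma net_prod_bond_weight_nonneg:
  assumes "A \<subseteq> edges M"
  shows "0 \<le> net_prod (bond_weight \<theta>) A"
  using net_prod_bond_weight_infinite[OF assms]
  by (cases "finite A") (simp_all add: net_prod_finite prod_nonneg bond_weight_nonneg)

lemma interaction_term_bound:
  obtains C where "\<And>e t. \<bar>edge_J J e * ft t\<bar> \<le> C * edge_J J e"
proof -
  obtain C where C: "\<And>t. \<bar>ft t\<bar> \<le> C"
    using ft_bounded by (auto simp: bounded_iff)
  have "\<bar>edge_J J e * ft t\<bar> \<le> C * edge_J J e" for e t
  proof -
    have "\<bar>edge_J J e * ft t\<bar> = \<bar>ft t\<bar> * edge_J J e"
      using edge_J_nonneg[of e] by (simp add: abs_mult mult.commute)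
    also have "\<dots> \<le> C * edge_J J e"
      by (rule mult_right_mono[OF C edge_J_nonneg])
    finally show ?thesis .
  qed
  then show ?thesis by (rule that)
qed

lemma interaction_terms_abs_summable:
  "(\<lambda>e. norm (edge_J J e * ft (edge_diff (config M \<theta>bar \<theta>) e))) summable_on edges M"
proof -
  obtain C where C: "\<And>e t. \<bar>edge_J J e * ft t\<bar> \<le> C * edge_J J e"
    using interaction_term_bound by blast
  have "(\<lambda>e. C * edge_J J e) summable_on edges M"
    using edge_J_summable[OF J_nonneg J_sym J_sum] by (rule summable_on_cmult_right)
  then show ?thesis
  proof (rule summable_on_comparison_test)
    show "norm (edge_J J e * ft (edge_diff (config M \<theta>bar \<theta>) e)) \<le> C * edge_J J e" for e
      using C by simp
  qed simp
qed

lemma bounded_range_interaction: "bounded (range interaction)"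
proof -
  obtain C where C: "\<And>e t. \<bar>edge_J J e * ft t\<bar> \<le> C * edge_J J e"
    using interaction_term_bound by blast
  have "\<bar>interaction \<theta>\<bar> \<le> (\<Sum>\<^sub>\<infinity>e\<in>edges M. C * edge_J J e)" for \<theta>
  proof -
    have "\<bar>interaction \<theta>\<bar> \<le> (\<Sum>\<^sub>\<infinity>e\<in>edges M. norm (edge_J J e * ft (edge_diff (config M \<theta>bar \<theta>) e)))"
      unfolding interaction_def using norm_infsum_bound[OF interaction_terms_abs_summable] by simp
    also have "\<dots> \<le> (\<Sum>\<^sub>\<infinity>e\<in>edges M. C * edge_J J e)"
      using interaction_terms_abs_summable
        summable_on_cmult_right[OF edge_J_summable[OF J_nonneg J_sym J_sum]]
    proof (rule infsum_mono)
      show "norm (edge_J J e * ft (edge_diff (config M \<theta>bar \<theta>) e)) \<le> C * edge_J J e" for e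
        using C by simp
    qed
    finally show ?thesis .
  qed
  then show ?thesis by (auto simp: bounded_iff)
qed

lemma borel_measurable_interaction: "interaction \<in> borel_measurable (angle_measure M)"
  unfolding interaction_def[abs_def]
proof (rule borel_measurable_infsum[OF countable_edges])
  show "(\<lambda>\<theta>. edge_J J e * ft (edge_diff (config M \<theta>bar \<theta>) e)) \<in> borel_measurable (angle_measure M)"
    for e
    by (intro borel_measurable_times borel_measurable_const borel_measurable_edge_diff ft_cont)
  show "(\<lambda>e. edge_J J e * ft (edge_diff (config M \<theta>bar \<theta>) e)) summable_on edges M" for \<theta>
    using interaction_terms_abs_summable by (rule abs_summable_summable)
qed

lemma integrable_Z_A_integrand:
  assumes "finite D"
  shows "integrable (angle_measure M) (\<lambda>\<theta>. exp (interaction \<theta>) * prod (bond_weight \<theta>) D)"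
proof -
  obtain B where B: "\<And>\<theta>. \<bar>interaction \<theta>\<bar> \<le> B"
    using bounded_range_interaction by (auto simp: bounded_iff)
  have "\<bar>exp (interaction \<theta>) * prod (bond_weight \<theta>) D\<bar> \<le> exp B * 2 ^ card D" for \<theta>
  proof -
    have "prod (bond_weight \<theta>) D \<le> 2 ^ card D"
      using bond_weight_nonneg bond_weight_le_2 by (intro prod_le_power) auto
    moreover have "exp (interaction \<theta>) \<le> exp B" using B[of \<theta>] by simp
    ultimately show ?thesis
      by (simp add: abs_mult prod_nonneg bond_weight_nonneg mult_mono)
  qed
  moreover have "(\<lambda>\<theta>. exp (interaction \<theta>) * prod (bond_weight \<theta>) D) \<in> borel_measurable (angle_measure M)"
    by (intro borel_measurable_times borel_measurable_prod borel_measurable_bond_weight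
          measurable_compose[OF borel_measurable_interaction borel_measurable_exp])
  ultimately show ?thesis
    by (intro finite_measure.integrable_const_bound[OF finite_measure_angle_measure]) auto
qed

lemma Z_A_nonneg:
  assumes "A \<subseteq> edges M"
  shows "0 \<le> Z_A J M \<theta>bar ft eb A"
  unfolding Z_A_eq_integral
  by (intro integral_nonneg_AE AE_I2 mult_nonneg_nonneg net_prod_bond_weight_nonneg assms) simp

lemma Z_total_nonneg: "0 \<le> Z_total J M \<theta>bar ft eb"
  unfolding Z_total_def by (intro infsum_nonneg Z_A_nonneg) auto

lemma Z_A_infinite:
  assumes "A \<subseteq> edges M" and "infinite A"
  shows "Z_A J M \<theta>bar ft eb A = 0"
  unfolding Z_A_eq_integral net_prod_bond_weight_infinite[OF assms] by simp

lemma Z_A_insert_le: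
  assumes "finite D" and "e \<notin> D"
  shows "Z_A J M \<theta>bar ft eb (insert e D) \<le> 2 * \<epsilon> * edge_J J e * Z_A J M \<theta>bar ft eb D"
proof -
  let ?w = "\<lambda>\<theta>. exp (interaction \<theta>) * prod (bond_weight \<theta>) D"
  have "Z_A J M \<theta>bar ft eb (insert e D) = (\<integral>\<theta>. bond_weight \<theta> e * ?w \<theta> \<partial>angle_measure M)"
    unfolding Z_A_eq_integral using assms by (simp add: net_prod_finite mult.left_commute)
  also have "\<dots> \<le> (\<integral>\<theta>. 2 * \<epsilon> * edge_J J e * ?w \<theta> \<partial>angle_measure M)"
  proof (rule integral_mono)
    show "integrable (angle_measure M) (\<lambda>\<theta>. bond_weight \<theta> e * ?w \<theta>)"
      using integrable_Z_A_integrand[of "insert e D"] assms by (simp add: mult.left_commute)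
    show "integrable (angle_measure M) (\<lambda>\<theta>. 2 * \<epsilon> * edge_J J e * ?w \<theta>)"
      using integrable_Z_A_integrand[OF assms(1)] by simp
    show "bond_weight \<theta> e * ?w \<theta> \<le> 2 * \<epsilon> * edge_J J e * ?w \<theta>" for \<theta>
      by (intro mult_right_mono bond_weight_le) (simp add: prod_nonneg bond_weight_nonneg)
  qed
  also have "\<dots> = 2 * \<epsilon> * edge_J J e * Z_A J M \<theta>bar ft eb D"
    unfolding Z_A_eq_integral using assms by (simp add: net_prod_finite)
  finally show ?thesis .
qed

lemma edge_pi_insert_le:
  assumes "D \<subseteq> edges M" and "e \<in> edges M" and "e \<notin> D"
  shows "edge_pi J M \<theta>bar ft eb (insert e D) \<le> 2 * \<epsilon> * edge_J J e * edge_pi J M \<theta>bar ft eb D"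
proof (cases "finite D")
  case True
  then show ?thesis
    unfolding edge_pi_def using Z_A_insert_le[OF True assms(3)] Z_total_nonneg
    by (simp add: divide_right_mono)
next
  case False
  then show ?thesis
    unfolding edge_pi_def using assms by (simp add: Z_A_infinite)
qed

end

theorem mainTheorem4:
  fixes J :: "vertex \<Rightarrow> real" and M :: int and \<theta>bar :: "vertex \<Rightarrow> real"
    and K :: nat and c :: "nat \<Rightarrow> real" and eb :: "real \<Rightarrow> real" and \<epsilon> :: real
  assumes J_nonneg: "\<And>x. J x \<ge> 0"
    and J_sym: "\<And>x. J x = J (- x)"
    and J_sum: "(J has_sum 1) UNIV"
    and M_ge: "M \<ge> 1"
    and bc: "\<And>y. \<theta>bar y \<in> {0..<2*pi}"
    and eb_cont: "continuous_on UNIV eb"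
    and eb_per: "\<And>t. eb (t + 2*pi) = eb t"
    and eb_bounds: "\<And>t. 0 \<le> eb t \<and> eb t \<le> \<epsilon>"
    and eps: "0 < \<epsilon>" "\<epsilon> \<le> 1"
  shows "\<forall>D x y. D \<subseteq> edges M \<longrightarrow> x \<noteq> y \<longrightarrow> {x, y} \<in> edges M \<longrightarrow> {x, y} \<notin> D \<longrightarrow>
           edge_pi J M \<theta>bar (trig_poly K c) eb (insert {x, y} D)
             \<le> 2 * \<epsilon> * J (x - y) * edge_pi J M \<theta>bar (trig_poly K c) eb D"
proof (intro allI impI)
  interpret rotator_model J M \<theta>bar "trig_poly K c" eb \<epsilon>
    using J_nonneg J_sym J_sum eb_cont eb_bounds eps
    by unfold_locales (simp_all add: continuous_on_trig_poly bounded_range_trig_poly)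
  fix D x y
  assume "D \<subseteq> edges M" "x \<noteq> y" "{x, y} \<in> edges M" "{x, y} \<notin> D"
  with edge_pi_insert_le edge_J_doubleton[where J = J, OF \<open>x \<noteq> y\<close> J_sym]
  show "edge_pi J M \<theta>bar (trig_poly K c) eb (insert {x, y} D)
      \<le> 2 * \<epsilon> * J (x - y) * edge_pi J M \<theta>bar (trig_poly K c) eb D"
    by metis
qed

end
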